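(* Let $B_1,\dots,B_n$ be components with pairwise disjoint action sets and $\gamma$ a set of interactions over them. For each $i$ let $\mathit{CI}(B_i^h)$ be the component invariant of $B_i^h$, and let $\mathit{II}(\gamma)$ be the interaction invariant. Then $\Phi=\exists\mathcal{H}_A.\big(\bigwedge_i\mathit{CI}(B_i^h)\wedge\mathit{II}(\gamma)\wedge\mathcal{E}(\gamma)\big)$ is an invariant of $\|_\gamma B_i$, where $\mathcal{H}_A$ is the set of all history clocks $h_0$ and $h_a$, $a\in\bigcup_iA_i$.
   Context: Components and semantics: a component is a timed automaton $B=(L,A,\mathcal{X},T,\mathsf{tpc},s_0)$ with locations $L$, actions $A$, clocks $\mathcal{X}$, edges $(l,(a,g,r),l')\in T$ (action, clock-constraint guard, reset set), time progress conditions $\mathsf{tpc}(l)$ (conjunctions of $x\le ct$), initial configuration $s_0=(l_0,c_0)$. States $(l,\mathbf{v})$, $\mathbf{v}$ a valuation in $\mathbb{R}_{\ge0}$; time transitions $(l,\mathbf{v})\xrightarrow{\delta}(l,\mathbf{v}+\delta)$ if $\mathsf{tpc}(l)$ holds along $[0,\delta]$; discrete transitions $(l,\mathbf{v})\xrightarrow{a}(l',\mathbf{v}[r])$ if $(l,(a,g,r),l')\in T$, $\mathbf{v}\models g$, $\mathbf{v}[r]\models\mathsf{tpc}(l')$; initial states $(l_0,\mathbf{v}_0)$ with $\mathbf{v}_0\models c_0$. A state predicate (boolean combination of location predicates $\mathit{at}(l)$ and clock constraints) is an invariant if it holds in every reachable state. Systems: for components $B_i$ with pairwise disjoint action sets $A_i$,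 an interaction is a nonempty $\alpha\subseteq\bigcup_iA_i$ with at most one action per component; $\mathit{Act}(\gamma)=\bigcup_{\alpha\in\gamma}\alpha$. $\|_\gamma B_i$ has locations $\times_iL_i$, clocks $\bigcup_i\mathcal{X}_i$, conjunction of tpc's and of initial constraints, and for each $\alpha=\{a_i\}_{i\in I}\in\gamma$ and edges $(l_i,(a_i,g_i,r_i),l'_i)\in T_i$ ($i\in I$) a joint edge with guard $\bigwedge_{i\in I}g_i$, reset $\bigcup_{i\in I}r_i$, moving exactly the components in $I$. History clocks: $B^h$ adds fresh clocks $h_0$ and $h_a$ ($a\in A$), adds $h_a$ to the resets of each edge labelled $a$, and has initial constraint $c_0\wedge h_0=0\wedge\bigwedge_{a\in A}h_a>0$. In $\|_\gamma B_i^h$, $h_0$ (never reset nor tested) is shared by all components. $\exists S.\Phi$ quantifies existentially over nonnegative real values of clocks in $S$. Invariants used: $\mathit{CI}(B^h)$ is the disjunction of $\mathit{at}(l)\wedge\zeta$ over all symbolic states $(l,\zeta)$ reachable in the (normalised) zone graph of $B^h$ from its initial symbolic state; it is an invariant of $B^h$. $\mathit{II}(\gamma)$ is a predicate over locations only (a conjunction of disjunctions of location predicates, obtained from initially marked traps of an associated Petri net) which is an invariant of $\|_\gamma B_i$. Interaction inequalities: $\gamma\ominus\alpha=\{\beta\setminus\alpha\mid\beta\in\gamma,\beta\not\subseteq\alpha\}$; $\mathcal{E}(\emptyset)=\mathit{true}$ and for $\gamma\ne\emptyset$, $\mathcal{E}(\gamma)=\bigvee_{\alpha\in\gamma}\Big(\bigwedge_{a_i,a_j\in\alpha}h_{a_i}=h_{a_j}\wedge\bigwedge_{a_i\in\alpha,\,a_k\in\mathit{Act}(\gamma\ominus\alpha)}h_{a_i}\le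 h_{a_k}\wedge\mathcal{E}(\gamma\ominus\alpha)\Big)$. *)

theory Defs
  imports Complex_Main
begin

datatype rel = RLt | RLe | REq | RGe | RGt

fun cmp :: "rel \<Rightarrow> real \<Rightarrow> real \<Rightarrow> bool" where
  "cmp RLt a b = (a < b)"
| "cmp RLe a b = (a \<le> b)"
| "cmp REq a b = (a = b)"
| "cmp RGe a b = (a \<ge> b)"
| "cmp RGt a b = (a > b)"

datatype 'x atom = Atom 'x rel int | Diag 'x 'x rel int

type_synonym 'x cc = "'x atom set"
type_synonym 'x val = "'x \<Rightarrow> real"

fun sat_atom :: "'x val \<Rightarrow> 'x atom \<Rightarrow> bool" where
  "sat_atom v (Atom x r c) = cmp r (v x) (of_int c)"
| "sat_atom v (Diag x y r c) = cmp r (v x - v y) (of_int c)"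

definition sat :: "'x val \<Rightarrow> 'x cc \<Rightarrow> bool" where
  "sat v g \<longleftrightarrow> (\<forall>t\<in>g. sat_atom v t)"

fun atom_clks :: "'x atom \<Rightarrow> 'x set" where
  "atom_clks (Atom x r c) = {x}"
| "atom_clks (Diag x y r c) = {x, y}"

definition cc_clks :: "'x cc \<Rightarrow> 'x set" where
  "cc_clks g = (\<Union>t\<in>g. atom_clks t)"

definition delay :: "'x val \<Rightarrow> real \<Rightarrow> 'x val" where
  "delay v d = (\<lambda>x. v x + d)"

definition reset :: "'x set \<Rightarrow> 'x val \<Rightarrow> 'x val" where
  "reset r v = (\<lambda>x. if x \<in> r then 0 else v x)"

text \<open>tpc l is a set of pairs (x, ct) standing for the conjunction of x \<le> ct.\<close>
record ('l, 'a, 'x) ta =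
  locs :: "'l set"
  acts :: "'a set"
  clks :: "'x set"
  edges :: "('l \<times> 'a \<times> 'x cc \<times> 'x set \<times> 'l) set"
  tpc :: "'l \<Rightarrow> ('x \<times> int) set"
  init_loc :: 'l
  init_cc :: "'x cc"

definition src :: "('l \<times> 'a \<times> 'x cc \<times> 'x set \<times> 'l) \<Rightarrow> 'l" where "src e = fst e"
definition lab :: "('l \<times> 'a \<times> 'x cc \<times> 'x set \<times> 'l) \<Rightarrow> 'a" where "lab e = fst (snd e)"
definition grd :: "('l \<times> 'a \<times> 'x cc \<times> 'x set \<times> 'l) \<Rightarrow> 'x cc" where "grd e = fst (snd (snd e))"
definition rst :: "('l \<times> 'a \<times> 'x cc \<times> 'x set \<times> 'l) \<Rightarrow> 'x set" where "rst e = fst (snd (snd (snd e)))"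
definition tgt :: "('l \<times> 'a \<times> 'x cc \<times> 'x set \<times> 'l) \<Rightarrow> 'l" where "tgt e = snd (snd (snd (snd e)))"

definition wf_ta :: "('l, 'a, 'x) ta \<Rightarrow> bool" where
  "wf_ta B \<longleftrightarrow> finite (locs B) \<and> finite (acts B) \<and> finite (clks B) \<and> finite (edges B)
     \<and> init_loc B \<in> locs B \<and> finite (init_cc B) \<and> cc_clks (init_cc B) \<subseteq> clks B
     \<and> (\<forall>l. finite (tpc B l) \<and> fst ` tpc B l \<subseteq> clks B)
     \<and> (\<forall>e\<in>edges B. src e \<in> locs B \<and> lab e \<in> acts B \<and> finite (grd e) \<and> cc_clks (grd e) \<subseteq> clks B
                     \<and> rst e \<subseteq> clks B \<and> tgt e \<in> locs B)"

definition sat_tpc :: "('l, 'a, 'x) ta \<Rightarrow> 'l \<Rightarrow> 'x val \<Rightarrow> bool" where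
  "sat_tpc B l v \<longleftrightarrow> (\<forall>(x, c)\<in>tpc B l. v x \<le> of_int c)"

inductive reach :: "('l, 'a, 'x) ta \<Rightarrow> 'l \<Rightarrow> 'x val \<Rightarrow> bool" for B where
  init: "sat v (init_cc B) \<Longrightarrow> (\<forall>x. 0 \<le> v x) \<Longrightarrow> reach B (init_loc B) v"
| time: "reach B l v \<Longrightarrow> 0 \<le> d \<Longrightarrow> (\<forall>t. 0 \<le> t \<and> t \<le> d \<longrightarrow> sat_tpc B l (delay v t))
          \<Longrightarrow> reach B l (delay v d)"
| disc: "reach B l v \<Longrightarrow> (l, a, g, r, l') \<in> edges B \<Longrightarrow> sat v g \<Longrightarrow> sat_tpc B l' (reset r v)
          \<Longrightarrow> reach B l' (reset r v)"

definition invariant :: "('l, 'a, 'x) ta \<Rightarrow> ('l \<Rightarrow> 'x val \<Rightarrow> bool) \<Rightarrow> bool" where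
  "invariant B P \<longleftrightarrow> (\<forall>l v. reach B l v \<longrightarrow> P l v)"

datatype ('x, 'a) hclk = Cl 'x | H0 | Hact 'a

definition hist :: "('l, 'a, 'x) ta \<Rightarrow> ('l, 'a, ('x, 'a) hclk) ta" where
  "hist B = \<lparr> locs = locs B, acts = acts B,
     clks = Cl ` clks B \<union> {H0} \<union> Hact ` acts B,
     edges = {(l, a, map_atom Cl ` g, Cl ` r \<union> {Hact a}, l') | l a g r l'. (l, a, g, r, l') \<in> edges B},
     tpc = (\<lambda>l. (\<lambda>(x, c). (Cl x, c)) ` tpc B l),
     init_loc = init_loc B,
     init_cc = map_atom Cl ` init_cc B \<union> {Atom H0 REq 0} \<union> {Atom (Hact a) RGt 0 | a. a \<in> acts B} \<rparr>"

type_synonym 'x zone = "'x val set"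

definition zup :: "('l, 'a, 'x) ta \<Rightarrow> 'l \<Rightarrow> 'x zone \<Rightarrow> 'x zone" where
  "zup B l Z = Z \<union> {delay v d | v d. v \<in> Z \<and> 0 \<le> d \<and> (\<forall>t. 0 \<le> t \<and> t \<le> d \<longrightarrow> sat_tpc B l (delay v t))}"

definition zpost :: "('l, 'a, 'x) ta \<Rightarrow> 'x cc \<Rightarrow> 'x set \<Rightarrow> 'l \<Rightarrow> 'x zone \<Rightarrow> 'x zone" where
  "zpost B g r l' Z = {reset r v | v. v \<in> Z \<and> sat v g \<and> sat_tpc B l' (reset r v)}"

inductive zreach :: "('l, 'a, 'x) ta \<Rightarrow> ('x zone \<Rightarrow> 'x zone) \<Rightarrow> 'l \<Rightarrow> 'x zone \<Rightarrow> bool"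
  for B nrm where
  zinit: "zreach B nrm (init_loc B) (nrm (zup B (init_loc B) {v. sat v (init_cc B) \<and> (\<forall>x. 0 \<le> v x)}))"
| zstep: "zreach B nrm l Z \<Longrightarrow> (l, a, g, r, l') \<in> edges B
           \<Longrightarrow> zreach B nrm l' (nrm (zup B l' (zpost B g r l' Z)))"

text \<open>CI(B): disjunction of at(l) and zeta over reachable symbolic states; zeta constrains only the
  clocks of B, so the valuation is compared on clks B only.\<close>
definition CI :: "('l, 'a, 'x) ta \<Rightarrow> ('x zone \<Rightarrow> 'x zone) \<Rightarrow> 'l \<Rightarrow> 'x val \<Rightarrow> bool" where
  "CI B nrm l v \<longleftrightarrow> (\<exists>Z. zreach B nrm l Z \<and> (\<exists>u\<in>Z. \<forall>x\<in>clks B. u x = v x))"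

definition participants :: "('l, 'a, 'x) ta list \<Rightarrow> 'a set \<Rightarrow> nat set" where
  "participants Bs \<alpha> = {i. i < length Bs \<and> \<alpha> \<inter> acts (Bs ! i) \<noteq> {}}"

definition is_interaction :: "('l, 'a, 'x) ta list \<Rightarrow> 'a set \<Rightarrow> bool" where
  "is_interaction Bs \<alpha> \<longleftrightarrow> \<alpha> \<noteq> {} \<and> \<alpha> \<subseteq> (\<Union>i<length Bs. acts (Bs ! i))
     \<and> (\<forall>i<length Bs. \<forall>a\<in>\<alpha>. \<forall>b\<in>\<alpha>. a \<in> acts (Bs ! i) \<and> b \<in> acts (Bs ! i) \<longrightarrow> a = b)"

definition sys_locs :: "('l, 'a, 'x) ta list \<Rightarrow> 'l list set" where
  "sys_locs Bs = {ls. length ls = length Bs \<and> (\<forall>i<length Bs. ls ! i \<in> locs (Bs ! i))}"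

definition sys :: "('l, 'a, 'x) ta list \<Rightarrow> 'a set set \<Rightarrow> ('l list, 'a set, 'x) ta" where
  "sys Bs \<gamma> = \<lparr> locs = sys_locs Bs, acts = \<gamma>,
     clks = (\<Union>i<length Bs. clks (Bs ! i)),
     edges = {(ls, \<alpha>, g, r, ls') | ls \<alpha> g r ls'. \<alpha> \<in> \<gamma> \<and> ls \<in> sys_locs Bs \<and>
        (\<exists>es :: nat \<Rightarrow> ('l \<times> 'a \<times> 'x cc \<times> 'x set \<times> 'l).
           (\<forall>i\<in>participants Bs \<alpha>. es i \<in> edges (Bs ! i) \<and> src (es i) = ls ! i \<and> lab (es i) \<in> \<alpha>)
           \<and> g = (\<Union>i\<in>participants Bs \<alpha>. grd (es i))
           \<and> r = (\<Union>i\<in>participants Bs \<alpha>. rst (es i))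
           \<and> ls' = map (\<lambda>i. if i \<in> participants Bs \<alpha> then tgt (es i) else ls ! i) [0..<length Bs])},
     tpc = (\<lambda>ls. \<Union>i<length Bs. tpc (Bs ! i) (ls ! i)),
     init_loc = map init_loc Bs,
     init_cc = (\<Union>i<length Bs. init_cc (Bs ! i)) \<rparr>"

definition pn_places :: "('l, 'a, 'x) ta list \<Rightarrow> (nat \<times> 'l) set" where
  "pn_places Bs = {(i, l). i < length Bs \<and> l \<in> locs (Bs ! i)}"

definition pn_trans :: "('l, 'a, 'x) ta list \<Rightarrow> 'a set set \<Rightarrow> ((nat \<times> 'l) set \<times> (nat \<times> 'l) set) set" where
  "pn_trans Bs \<gamma> = {(pre, post) | pre post. \<exists>\<alpha>\<in>\<gamma>.
      \<exists>es :: nat \<Rightarrow> ('l \<times> 'a \<times> 'x cc \<times> 'x set \<times> 'l).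
        (\<forall>i\<in>participants Bs \<alpha>. es i \<in> edges (Bs ! i) \<and> lab (es i) \<in> \<alpha>)
        \<and> pre = {(i, src (es i)) | i. i \<in> participants Bs \<alpha>}
        \<and> post = {(i, tgt (es i)) | i. i \<in> participants Bs \<alpha>}}"

definition trap :: "('l, 'a, 'x) ta list \<Rightarrow> 'a set set \<Rightarrow> (nat \<times> 'l) set \<Rightarrow> bool" where
  "trap Bs \<gamma> S \<longleftrightarrow> S \<subseteq> pn_places Bs \<and>
     (\<forall>(pre, post)\<in>pn_trans Bs \<gamma>. pre \<inter> S \<noteq> {} \<longrightarrow> post \<inter> S \<noteq> {})"

definition init_marked :: "('l, 'a, 'x) ta list \<Rightarrow> (nat \<times> 'l) set \<Rightarrow> bool" where
  "init_marked Bs S \<longleftrightarrow> (\<exists>i<length Bs. (i, init_loc (Bs ! i)) \<in> S)"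

definition II :: "('l, 'a, 'x) ta list \<Rightarrow> 'a set set \<Rightarrow> 'l list \<Rightarrow> bool" where
  "II Bs \<gamma> ls \<longleftrightarrow> (\<forall>S. trap Bs \<gamma> S \<and> init_marked Bs S \<longrightarrow> (\<exists>(i, l)\<in>S. ls ! i = l))"

definition Act :: "'a set set \<Rightarrow> 'a set" where
  "Act \<gamma> = \<Union>\<gamma>"

definition ominus :: "'a set set \<Rightarrow> 'a set \<Rightarrow> 'a set set" where
  "ominus \<gamma> \<alpha> = {\<beta> - \<alpha> | \<beta>. \<beta> \<in> \<gamma> \<and> \<not> \<beta> \<subseteq> \<alpha>}"

text \<open>E(gamma), evaluated on the history-clock values h a (for finite gamma this coincides with
  the recursive definition).\<close>
inductive EE :: "'a set set \<Rightarrow> ('a \<Rightarrow> real) \<Rightarrow> bool" where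
  E_empty: "EE {} h"
| E_step: "\<alpha> \<in> \<gamma> \<Longrightarrow> (\<forall>a\<in>\<alpha>. \<forall>b\<in>\<alpha>. h a = h b) \<Longrightarrow> (\<forall>a\<in>\<alpha>. \<forall>b\<in>Act (ominus \<gamma> \<alpha>). h a \<le> h b)
     \<Longrightarrow> EE (ominus \<gamma> \<alpha>) h \<Longrightarrow> EE \<gamma> h"

definition Phi :: "('l, 'a, 'x) ta list \<Rightarrow> 'a set set \<Rightarrow> (nat \<Rightarrow> ('x, 'a) hclk zone \<Rightarrow> ('x, 'a) hclk zone)
                   \<Rightarrow> 'l list \<Rightarrow> 'x val \<Rightarrow> bool" where
  "Phi Bs \<gamma> nrm ls v \<longleftrightarrow> (\<exists>w :: ('x, 'a) hclk val.
      (\<forall>x. w (Cl x) = v x) \<and> 0 \<le> w H0 \<and> (\<forall>a\<in>(\<Union>i<length Bs. acts (Bs ! i)). 0 \<le> w (Hact a))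
      \<and> (\<forall>i<length Bs. CI (hist (Bs ! i)) (nrm i) (ls ! i) w)
      \<and> II Bs \<gamma> ls
      \<and> EE \<gamma> (\<lambda>a. w (Hact a)))"

end

theory Submission
  imports Defs
begin

text \<open>Lift every reachable state of the product to a valuation of the history clocks: h_0 is the
  elapsed time and h_a the time since a last occurred (some positive value before that).
  Restricted to the clocks of B_i, the lifted run is a run of B_i^h, because disjointness of clocks
  and the one-action-per-component shape of interactions make each interaction reset, inside B_i,
  exactly the clocks and the history clock of the local edge; hence it lies in CI(B_i^h).
  Moreover h_a is a monotone function of how recently a fired, all actions of one interaction
  firing together, and this is what E(gamma) expresses: peel off the most recent interaction, whose
  history clocks are equal and smallest, and recurse on the older ones.\<close>

section \<open>Interaction inequalities from monotone history clocks\<close>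

fun fired_index :: "'a set list \<Rightarrow> 'a \<Rightarrow> nat" where
  "fired_index [] a = 0"
| "fired_index (\<beta> # s) a = (if a \<in> \<beta> then 0 else Suc (fired_index s a))"

text \<open>The list s records the interactions fired so far, most recent first, and
  fired_index s a is the position of the last one containing a (length s if none).\<close>
definition hist_ordered :: "'a set set \<Rightarrow> ('a \<Rightarrow> real) \<Rightarrow> bool" where
  "hist_ordered \<gamma> h \<longleftrightarrow> (\<exists>s f. set s \<subseteq> \<gamma> \<and> mono f \<and> 0 \<le> f 0 \<and> (\<forall>a. h a = f (fired_index s a)))"

lemma ominus_ominus: "ominus (ominus \<gamma> U) \<alpha> = ominus \<gamma> (U \<union> \<alpha>)"
proof (rule set_eqI, rule iffI)
  fix x assume "x \<in> ominus (ominus \<gamma> U) \<alpha>"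
  then obtain \<beta> where "x = \<beta> - U - \<alpha>" "\<beta> \<in> \<gamma>" "\<not> \<beta> \<subseteq> U" "\<not> \<beta> - U \<subseteq> \<alpha>"
    unfolding ominus_def by blast
  then show "x \<in> ominus \<gamma> (U \<union> \<alpha>)"
    unfolding ominus_def by (intro CollectI exI[of _ \<beta>]) blast
next
  fix x assume "x \<in> ominus \<gamma> (U \<union> \<alpha>)"
  then obtain \<beta> where "x = \<beta> - (U \<union> \<alpha>)" "\<beta> \<in> \<gamma>" "\<not> \<beta> \<subseteq> U \<union> \<alpha>"
    unfolding ominus_def by blast
  moreover have "\<beta> - U \<in> ominus \<gamma> U"
    using calculation unfolding ominus_def by blast
  ultimately show "x \<in> ominus (ominus \<gamma> U) \<alpha>"
    unfolding ominus_def by (intro CollectI exI[of _ "\<beta> - U"]) blast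
qed

lemma Act_ominus: "Act (ominus \<gamma> U) = Act \<gamma> - U"
  unfolding Act_def ominus_def by auto

lemma ominus_empty: "(\<forall>\<alpha>\<in>\<gamma>. \<alpha> \<noteq> {}) \<Longrightarrow> ominus \<gamma> {} = \<gamma>"
  unfolding ominus_def by force

text \<open>When all remaining history clocks are equal, any interaction may be peeled off next.\<close>
lemma EE_ominus_const:
  assumes "finite (Act \<gamma> - U)" and "\<forall>a\<in>Act \<gamma> - U. h a = c"
  shows "EE (ominus \<gamma> U) h"
  using assms
proof (induction "card (Act \<gamma> - U)" arbitrary: U rule: less_induct)
  case less
  show ?case
  proof (cases "ominus \<gamma> U = {}")
    case True
    then show ?thesis by (simp add: EE.E_empty)
  next
    case False
    then obtain \<alpha> where \<alpha>: "\<alpha> \<in> ominus \<gamma> U" by blast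
    then have "\<alpha> \<noteq> {}" and \<alpha>_sub: "\<alpha> \<subseteq> Act \<gamma> - U"
      unfolding ominus_def Act_def by auto
    then have smaller: "Act \<gamma> - (U \<union> \<alpha>) \<subset> Act \<gamma> - U" by blast
    have EE_rest: "EE (ominus \<gamma> (U \<union> \<alpha>)) h"
    proof (rule less.hyps)
      show "card (Act \<gamma> - (U \<union> \<alpha>)) < card (Act \<gamma> - U)"
        using less.prems(1) smaller by (rule psubset_card_mono)
      show "finite (Act \<gamma> - (U \<union> \<alpha>))"
        using less.prems(1) smaller by (meson finite_subset psubset_imp_subset)
    qed (use less.prems(2) in blast)
    have h_\<alpha>: "\<forall>a\<in>\<alpha>. h a = c"
      using \<alpha>_sub less.prems(2) by blast
    show ?thesis
      by (rule EE.E_step[of \<alpha>])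
        (use \<alpha> h_\<alpha> EE_rest less.prems(2) in \<open>auto simp: ominus_ominus Act_ominus\<close>)
  qed
qed

text \<open>The interaction peeled off next is the most recently fired one, the head of s: its
  actions carry the smallest history clocks.\<close>
lemma EE_ominus_fired_index:
  assumes "set s \<subseteq> \<gamma>" and "finite (Act \<gamma> - U)" and "mono f"
    and "\<forall>a\<in>Act \<gamma> - U. h a = f (fired_index s a)"
  shows "EE (ominus \<gamma> U) h"
  using assms
proof (induction s arbitrary: U f)
  case Nil
  then show ?case by (intro EE_ominus_const[where c="f 0"]) auto
next
  case (Cons \<beta> s)
  have mono_shift: "mono (\<lambda>n. f (Suc n))"
    using Cons.prems(3) unfolding mono_def by simp
  have IH: "EE (ominus \<gamma> U') h" if "Act \<gamma> - U' \<subseteq> Act \<gamma> - U" "(Act \<gamma> - U') \<inter> \<beta> = {}" for U'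
  proof (rule Cons.IH[OF _ _ mono_shift])
    show "\<forall>a\<in>Act \<gamma> - U'. h a = f (Suc (fired_index s a))"
      using Cons.prems(4) that by force
  qed (use Cons.prems that in \<open>auto intro: finite_subset\<close>)
  show ?case
  proof (cases "\<beta> \<subseteq> U")
    case True
    then show ?thesis by (intro IH) auto
  next
    case False
    define \<alpha> where "\<alpha> = \<beta> - U"
    have \<alpha>: "\<alpha> \<in> ominus \<gamma> U"
      using Cons.prems(1) False unfolding \<alpha>_def ominus_def by auto
    have h_\<alpha>: "\<forall>a\<in>\<alpha>. h a = f 0"
    proof
      fix a assume "a \<in> \<alpha>"
      then have "a \<in> Act \<gamma> - U" "a \<in> \<beta>"
        using Cons.prems(1) unfolding \<alpha>_def Act_def by auto
      then show "h a = f 0"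
        using Cons.prems(4) by simp
    qed
    have h_rest: "\<forall>b\<in>Act \<gamma> - (U \<union> \<alpha>). f 0 \<le> h b"
    proof
      fix b assume "b \<in> Act \<gamma> - (U \<union> \<alpha>)"
      then have "h b = f (Suc (fired_index s b))"
        using Cons.prems(4) unfolding \<alpha>_def by auto
      then show "f 0 \<le> h b"
        using Cons.prems(3) by (simp add: monoD)
    qed
    have EE_rest: "EE (ominus \<gamma> (U \<union> \<alpha>)) h"
      by (rule IH) (auto simp: \<alpha>_def)
    show ?thesis
      by (rule EE.E_step[of \<alpha>])
        (use \<alpha> h_\<alpha> h_rest EE_rest in \<open>auto simp: ominus_ominus Act_ominus\<close>)
  qed
qed

lemma EE_if_hist_ordered:
  assumes "hist_ordered \<gamma> h" and "finite (Act \<gamma>)" and "\<forall>\<alpha>\<in>\<gamma>. \<alpha> \<noteq> {}"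
  shows "EE \<gamma> h"
proof -
  obtain s f where "set s \<subseteq> \<gamma>" "mono f" "\<forall>a. h a = f (fired_index s a)"
    using assms(1) unfolding hist_ordered_def by blast
  then have "EE (ominus \<gamma> {}) h"
    using assms(2) by (intro EE_ominus_fired_index) auto
  then show ?thesis
    using assms(3) by (simp add: ominus_empty)
qed

lemma hist_ordered_nonneg:
  assumes "hist_ordered \<gamma> h"
  shows "0 \<le> h a"
proof -
  obtain s f where "mono f" "0 \<le> f 0" "\<forall>a. h a = f (fired_index s a)"
    using assms unfolding hist_ordered_def by blast
  moreover have "f 0 \<le> f (fired_index s a)"
    using \<open>mono f\<close> by (simp add: monoD)
  ultimately show ?thesis by simp
qed

lemma hist_ordered_const: "0 \<le> c \<Longrightarrow> hist_ordered \<gamma> (\<lambda>_. c)"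
  unfolding hist_ordered_def by (intro exI[of _ "[]"] exI[of _ "\<lambda>_. c"]) (simp add: mono_def)

lemma hist_ordered_delay:
  assumes "hist_ordered \<gamma> h" and "0 \<le> d"
  shows "hist_ordered \<gamma> (\<lambda>a. h a + d)"
proof -
  obtain s f where "set s \<subseteq> \<gamma>" "mono f" "0 \<le> f 0" "\<forall>a. h a = f (fired_index s a)"
    using assms(1) unfolding hist_ordered_def by blast
  then show ?thesis
    unfolding hist_ordered_def using assms(2)
    by (intro exI[of _ s] exI[of _ "\<lambda>n. f n + d"]) (auto simp: mono_def)
qed

lemma hist_ordered_fire:
  assumes "hist_ordered \<gamma> h" and "\<alpha> \<in> \<gamma>"
  shows "hist_ordered \<gamma> (\<lambda>a. if a \<in> \<alpha> then 0 else h a)"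
proof -
  obtain s f where s: "set s \<subseteq> \<gamma>" and f: "mono f" "0 \<le> f 0" and h: "\<forall>a. h a = f (fired_index s a)"
    using assms(1) unfolding hist_ordered_def by blast
  have "mono (case_nat 0 f)"
    using f by (auto simp: mono_iff_le_Suc monoD split: nat.split)
  then show ?thesis
    unfolding hist_ordered_def using s h assms(2)
    by (intro exI[of _ "\<alpha> # s"] exI[of _ "case_nat 0 f"]) simp
qed

section \<open>Soundness of the zone graph\<close>

lemma delay_delay: "delay (delay v a) b = delay v (a + b)"
  by (simp add: delay_def add.assoc)

lemma delay_in_zup:
  assumes "w \<in> zup B l Z" and "0 \<le> d" and "\<forall>t. 0 \<le> t \<and> t \<le> d \<longrightarrow> sat_tpc B l (delay w t)"
  shows "delay w d \<in> zup B l Z"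
  using assms(1) unfolding zup_def
proof (elim UnE CollectE exE conjE)
  assume "w \<in> Z"
  then show "delay w d \<in> Z \<union> {delay v d | v d. v \<in> Z \<and> 0 \<le> d \<and>
      (\<forall>t. 0 \<le> t \<and> t \<le> d \<longrightarrow> sat_tpc B l (delay v t))}"
    using assms(2,3) by blast
next
  fix v d0 assume w: "w = delay v d0" and v: "v \<in> Z" and "0 \<le> d0"
    and tpc_v: "\<forall>t. 0 \<le> t \<and> t \<le> d0 \<longrightarrow> sat_tpc B l (delay v t)"
  have "sat_tpc B l (delay v t)" if "0 \<le> t" "t \<le> d0 + d" for t
  proof (cases "t \<le> d0")
    case False
    then have "sat_tpc B l (delay w (t - d0))"
      using assms(3) that by simp
    then show ?thesis
      by (simp add: w delay_delay)
  qed (use tpc_v that in blast)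
  then have "delay v (d0 + d) \<in> {delay v d | v d. v \<in> Z \<and> 0 \<le> d \<and>
      (\<forall>t. 0 \<le> t \<and> t \<le> d \<longrightarrow> sat_tpc B l (delay v t))}"
    using v \<open>0 \<le> d0\<close> assms(2) by force
  then show "delay w d \<in> Z \<union> {delay v d | v d. v \<in> Z \<and> 0 \<le> d \<and>
      (\<forall>t. 0 \<le> t \<and> t \<le> d \<longrightarrow> sat_tpc B l (delay v t))}"
    by (simp add: w delay_delay)
qed

text \<open>Extensivity of the normalisation is what keeps the discrete successors inside the zones.\<close>
lemma reach_imp_zreach:
  assumes "reach B l w" and nrm: "\<forall>Z. Z \<subseteq> nrm Z"
  shows "\<exists>Z. zreach B nrm l (nrm (zup B l Z)) \<and> w \<in> zup B l Z"
  using assms(1)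
proof induction
  case (init v)
  then have "v \<in> zup B (init_loc B) {v. sat v (init_cc B) \<and> (\<forall>x. 0 \<le> v x)}"
    unfolding zup_def by blast
  then show ?case
    using zreach.zinit by blast
next
  case (time l v d)
  then obtain Z where "zreach B nrm l (nrm (zup B l Z))" and "v \<in> zup B l Z"
    by blast
  then show ?case
    using delay_in_zup[of v B l Z d] time.hyps(2,3) by blast
next
  case (disc l v a g r l')
  then obtain Z where Z: "zreach B nrm l (nrm (zup B l Z))" and "v \<in> zup B l Z"
    by blast
  then have "reset r v \<in> zpost B g r l' (nrm (zup B l Z))"
    using disc.hyps nrm unfolding zpost_def by blast
  then have "reset r v \<in> zup B l' (zpost B g r l' (nrm (zup B l Z)))"
    unfolding zup_def by blast
  then show ?case
    using zreach.zstep[OF Z disc.hyps(2)] by blast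
qed

lemma CI_if_reach:
  assumes "reach B l u" and "\<forall>Z. Z \<subseteq> nrm Z" and "\<forall>c\<in>clks B. u c = w c"
  shows "CI B nrm l w"
proof -
  obtain Z where "zreach B nrm l (nrm (zup B l Z))" and "u \<in> zup B l Z"
    using reach_imp_zreach[OF assms(1,2)] by blast
  then show ?thesis
    unfolding CI_def using assms(2,3) by blast
qed

section \<open>Runs of components with history clocks\<close>

lemma hist_simps [simp]:
  "clks (hist B) = Cl ` clks B \<union> {H0} \<union> Hact ` acts B"
  "init_loc (hist B) = init_loc B"
  "init_cc (hist B) = map_atom Cl ` init_cc B \<union> {Atom H0 REq 0} \<union> {Atom (Hact a) RGt 0 | a. a \<in> acts B}"
  by (simp_all add: hist_def)

lemma hist_edge:
  "e \<in> edges B \<Longrightarrow>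
     (src e, lab e, map_atom Cl ` grd e, Cl ` rst e \<union> {Hact (lab e)}, tgt e) \<in> edges (hist B)"
  by (cases e) (auto simp: hist_def src_def lab_def grd_def rst_def tgt_def)

lemma wf_ta_tpc_clks: "wf_ta B \<Longrightarrow> fst ` tpc B l \<subseteq> clks B"
  unfolding wf_ta_def by blast

lemma wf_ta_edge:
  assumes "wf_ta B" and "e \<in> edges B"
  shows "lab e \<in> acts B" and "cc_clks (grd e) \<subseteq> clks B" and "rst e \<subseteq> clks B"
  using assms unfolding wf_ta_def by auto

lemma sat_map_atom: "sat u (map_atom f ` g) \<longleftrightarrow> sat (\<lambda>x. u (f x)) g"
proof -
  have "sat_atom u (map_atom f t) = sat_atom (\<lambda>x. u (f x)) t" for t
    by (cases t) auto
  then show ?thesis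
    unfolding sat_def by simp
qed

lemma sat_cong:
  assumes "\<forall>x\<in>cc_clks g. u x = v x"
  shows "sat u g \<longleftrightarrow> sat v g"
proof -
  have "sat_atom u t = sat_atom v t" if "\<forall>x\<in>atom_clks t. u x = v x" for t
    using that by (cases t) auto
  then show ?thesis
    using assms unfolding sat_def cc_clks_def by blast
qed

lemma sat_tpc_cong: "\<forall>x\<in>fst ` tpc B l. u x = v x \<Longrightarrow> sat_tpc B l u \<longleftrightarrow> sat_tpc B l v"
  unfolding sat_tpc_def by force

lemma sat_tpc_hist: "sat_tpc (hist B) l u \<longleftrightarrow> sat_tpc B l (\<lambda>x. u (Cl x))"
  unfolding sat_tpc_def hist_def by auto

lemma reset_agree:
  assumes "\<forall>c\<in>C. u c = w c" and "r \<inter> C = r' \<inter> C"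
  shows "\<forall>c\<in>C. reset r u c = reset r' w c"
proof
  fix c assume "c \<in> C"
  moreover from this have "c \<in> r \<longleftrightarrow> c \<in> r'"
    using assms(2) by blast
  ultimately show "reset r u c = reset r' w c"
    using assms(1) by (simp add: reset_def)
qed

lemma reach_hist_init:
  assumes "sat (\<lambda>x. w (Cl x)) (init_cc B)" and "\<forall>c. 0 \<le> w c"
    and "w H0 = 0" and "\<forall>a. 0 < w (Hact a)"
  shows "reach (hist B) (init_loc B) w"
proof -
  have "sat w (init_cc (hist B))"
    using assms(1,3,4) sat_map_atom[of w Cl "init_cc B"] unfolding sat_def by auto
  then show ?thesis
    using reach.init[where B="hist B"] assms(2) by simp
qed

lemma reach_hist_delay:
  assumes "wf_ta B" and "reach (hist B) l u" and "\<forall>x\<in>clks B. u (Cl x) = v x"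
    and "0 \<le> d" and "\<forall>t. 0 \<le> t \<and> t \<le> d \<longrightarrow> sat_tpc B l (delay v t)"
  shows "reach (hist B) l (delay u d)"
proof (rule reach.time[OF assms(2,4)], intro allI impI)
  fix t assume "0 \<le> t \<and> t \<le> d"
  then have "sat_tpc B l (delay v t)"
    using assms(5) by blast
  moreover have "\<forall>x\<in>fst ` tpc B l. delay u t (Cl x) = delay v t x"
    using assms(3) wf_ta_tpc_clks[OF assms(1)] unfolding delay_def by auto
  ultimately show "sat_tpc (hist B) l (delay u t)"
    unfolding sat_tpc_hist using sat_tpc_cong[of B l "\<lambda>x. delay u t (Cl x)" "delay v t"] by simp
qed

lemma reach_hist_edge:
  assumes "wf_ta B" and "e \<in> edges B" and "reach (hist B) (src e) u"
    and "\<forall>x\<in>clks B. u (Cl x) = v x" and "sat v (grd e)"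
    and "sat_tpc B (tgt e) v'" and "\<forall>x\<in>clks B. v' x = reset (rst e) v x"
  shows "reach (hist B) (tgt e) (reset (Cl ` rst e \<union> {Hact (lab e)}) u)"
proof (rule reach.disc[OF assms(3) hist_edge[OF assms(2)]])
  have "\<forall>x\<in>cc_clks (grd e). u (Cl x) = v x"
    using assms(4) wf_ta_edge(2)[OF assms(1,2)] by blast
  then show "sat u (map_atom Cl ` grd e)"
    unfolding sat_map_atom using assms(5) sat_cong[of "grd e" "\<lambda>x. u (Cl x)" v] by simp
  have "\<forall>x\<in>fst ` tpc B (tgt e). reset (Cl ` rst e \<union> {Hact (lab e)}) u (Cl x) = v' x"
  proof
    fix x assume "x \<in> fst ` tpc B (tgt e)"
    then have "x \<in> clks B"
      using wf_ta_tpc_clks[OF assms(1)] by blast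
    then show "reset (Cl ` rst e \<union> {Hact (lab e)}) u (Cl x) = v' x"
      using assms(4,7) by (auto simp: reset_def)
  qed
  then show "sat_tpc (hist B) (tgt e) (reset (Cl ` rst e \<union> {Hact (lab e)}) u)"
    unfolding sat_tpc_hist using assms(6)
      sat_tpc_cong[of B "tgt e" "\<lambda>x. reset (Cl ` rst e \<union> {Hact (lab e)}) u (Cl x)" v']
    by simp
qed

section \<open>Runs of the composed system\<close>

lemma sys_simps [simp]:
  "init_loc (sys Bs \<gamma>) = map init_loc Bs"
  "init_cc (sys Bs \<gamma>) = (\<Union>i<length Bs. init_cc (Bs ! i))"
  by (simp_all add: sys_def)

lemma sat_tpc_sys: "sat_tpc (sys Bs \<gamma>) ls v \<longleftrightarrow> (\<forall>i<length Bs. sat_tpc (Bs ! i) (ls ! i) v)"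
  unfolding sat_tpc_def sys_def by auto

lemma sys_edgeE:
  assumes "(l, \<alpha>, g, r, l') \<in> edges (sys Bs \<gamma>)"
  obtains es where "\<alpha> \<in> \<gamma>"
    and "\<forall>i\<in>participants Bs \<alpha>. es i \<in> edges (Bs ! i) \<and> src (es i) = l ! i \<and> lab (es i) \<in> \<alpha>"
    and "g = (\<Union>i\<in>participants Bs \<alpha>. grd (es i))" and "r = (\<Union>i\<in>participants Bs \<alpha>. rst (es i))"
    and "\<forall>i<length Bs. l' ! i = (if i \<in> participants Bs \<alpha> then tgt (es i) else l ! i)"
  using assms unfolding sys_def by auto

lemma participants_iff: "i \<in> participants Bs \<alpha> \<longleftrightarrow> i < length Bs \<and> \<alpha> \<inter> acts (Bs ! i) \<noteq> {}"
  by (simp add: participants_def)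

lemma II_init: "II Bs \<gamma> (map init_loc Bs)"
  unfolding II_def init_marked_def
proof (intro allI impI)
  fix S assume "trap Bs \<gamma> S \<and> (\<exists>i<length Bs. (i, init_loc (Bs ! i)) \<in> S)"
  then obtain i where "i < length Bs" "(i, init_loc (Bs ! i)) \<in> S"
    by blast
  then show "\<exists>(i, l)\<in>S. map init_loc Bs ! i = l"
    by (intro bexI[of _ "(i, init_loc (Bs ! i))"]) auto
qed

lemma II_step:
  assumes "II Bs \<gamma> l" and edge: "(l, \<alpha>, g, r, l') \<in> edges (sys Bs \<gamma>)"
  shows "II Bs \<gamma> l'"
  unfolding II_def
proof (intro allI impI)
  fix S assume S: "trap Bs \<gamma> S \<and> init_marked Bs S"
  obtain es where "\<alpha> \<in> \<gamma>"
    and es: "\<forall>i\<in>participants Bs \<alpha>. es i \<in> edges (Bs ! i) \<and> src (es i) = l ! i \<and> lab (es i) \<in> \<alpha>"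
    and l': "\<forall>i<length Bs. l' ! i = (if i \<in> participants Bs \<alpha> then tgt (es i) else l ! i)"
    using edge by (rule sys_edgeE)
  define pre where "pre = {(i, src (es i)) | i. i \<in> participants Bs \<alpha>}"
  define post where "post = {(i, tgt (es i)) | i. i \<in> participants Bs \<alpha>}"
  have "(pre, post) \<in> pn_trans Bs \<gamma>"
    unfolding pn_trans_def pre_def post_def using \<open>\<alpha> \<in> \<gamma>\<close> es by blast
  obtain i where i: "(i, l ! i) \<in> S"
    using assms(1) S unfolding II_def by blast
  then have "i < length Bs"
    using S unfolding trap_def pn_places_def by blast
  show "\<exists>(i, l)\<in>S. l' ! i = l"
  proof (cases "i \<in> participants Bs \<alpha>")
    case True
    then have "pre \<inter> S \<noteq> {}"
      using es i unfolding pre_def by force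
    then have "post \<inter> S \<noteq> {}"
      using \<open>(pre, post) \<in> pn_trans Bs \<gamma>\<close> S unfolding trap_def by blast
    then show ?thesis
      using l' unfolding post_def participants_iff by force
  next
    case False
    then show ?thesis
      using i l' \<open>i < length Bs\<close> by force
  qed
qed

lemma II_invariant: "reach (sys Bs \<gamma>) ls v \<Longrightarrow> II Bs \<gamma> ls"
  by (induction rule: reach.induct) (auto intro: II_init II_step)

lemma mem_UN_disjoint_family:
  assumes "\<And>j. j \<in> P \<Longrightarrow> A j \<subseteq> C j" and "\<And>j. j \<in> P \<Longrightarrow> j \<noteq> i \<Longrightarrow> C i \<inter> C j = {}"
    and "x \<in> C i"
  shows "x \<in> (\<Union>j\<in>P. A j) \<longleftrightarrow> i \<in> P \<and> x \<in> A i"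
  using assms by blast

definition comps_reachable :: "('l, 'a, 'x) ta list \<Rightarrow> 'l list \<Rightarrow> ('x, 'a) hclk val \<Rightarrow> bool" where
  "comps_reachable Bs ls w \<longleftrightarrow>
     (\<forall>i<length Bs. \<exists>u. reach (hist (Bs ! i)) (ls ! i) u \<and> (\<forall>c\<in>clks (hist (Bs ! i)). u c = w c))"

lemma comps_reachable_init:
  assumes "sat (\<lambda>x. w (Cl x)) (\<Union>i<length Bs. init_cc (Bs ! i))" and "\<forall>c. 0 \<le> w c"
    and "w H0 = 0" and "\<forall>a. 0 < w (Hact a)"
  shows "comps_reachable Bs (map init_loc Bs) w"
  unfolding comps_reachable_def
proof (intro allI impI exI conjI)
  fix i assume "i < length Bs"
  then have "sat (\<lambda>x. w (Cl x)) (init_cc (Bs ! i))"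
    using assms(1) unfolding sat_def by blast
  then show "reach (hist (Bs ! i)) (map init_loc Bs ! i) w"
    using reach_hist_init assms(2-4) \<open>i < length Bs\<close> by simp
qed simp

lemma comps_reachable_delay:
  assumes wf: "\<forall>i<length Bs. wf_ta (Bs ! i)" and "comps_reachable Bs ls w" and "0 \<le> d"
    and "\<forall>t. 0 \<le> t \<and> t \<le> d \<longrightarrow> sat_tpc (sys Bs \<gamma>) ls (delay (\<lambda>x. w (Cl x)) t)"
  shows "comps_reachable Bs ls (delay w d)"
  unfolding comps_reachable_def
proof (intro allI impI)
  fix i assume i: "i < length Bs"
  then obtain u where u: "reach (hist (Bs ! i)) (ls ! i) u" and agree: "\<forall>c\<in>clks (hist (Bs ! i)). u c = w c"
    using assms(2) unfolding comps_reachable_def by blast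
  have agree_Cl: "\<forall>x\<in>clks (Bs ! i). u (Cl x) = w (Cl x)"
    using agree by simp
  have "\<forall>t. 0 \<le> t \<and> t \<le> d \<longrightarrow> sat_tpc (Bs ! i) (ls ! i) (delay (\<lambda>x. w (Cl x)) t)"
    using assms(4) i by (simp add: sat_tpc_sys)
  then have "reach (hist (Bs ! i)) (ls ! i) (delay u d)"
    using wf i by (intro reach_hist_delay[OF _ u agree_Cl assms(3)]) auto
  moreover have "\<forall>c\<in>clks (hist (Bs ! i)). delay u d c = delay w d c"
    using agree by (simp add: delay_def)
  ultimately show "\<exists>u. reach (hist (Bs ! i)) (ls ! i) u \<and> (\<forall>c\<in>clks (hist (Bs ! i)). u c = delay w d c)"
    by blast
qed

lemma sys_edge_clock_reset_local:
  assumes wf: "\<forall>i<length Bs. wf_ta (Bs ! i)"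
    and disj: "\<forall>i<length Bs. \<forall>j<length Bs. i \<noteq> j \<longrightarrow> clks (Bs ! i) \<inter> clks (Bs ! j) = {}"
    and es: "\<forall>j\<in>participants Bs \<alpha>. es j \<in> edges (Bs ! j)"
    and "i < length Bs" and "x \<in> clks (Bs ! i)"
  shows "x \<in> (\<Union>j\<in>participants Bs \<alpha>. rst (es j)) \<longleftrightarrow> i \<in> participants Bs \<alpha> \<and> x \<in> rst (es i)"
proof (rule mem_UN_disjoint_family[where C="\<lambda>j. clks (Bs ! j)"])
  show "rst (es j) \<subseteq> clks (Bs ! j)" if "j \<in> participants Bs \<alpha>" for j
  proof (rule wf_ta_edge(3))
    show "wf_ta (Bs ! j)"
      using wf that unfolding participants_iff by blast
  qed (use es that in blast)
  show "clks (Bs ! i) \<inter> clks (Bs ! j) = {}" if "j \<in> participants Bs \<alpha>" "j \<noteq> i" for j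
    using disj assms(4) that unfolding participants_iff by blast
qed (rule assms(5))

lemma interaction_action_local:
  assumes wf: "\<forall>i<length Bs. wf_ta (Bs ! i)" and "is_interaction Bs \<alpha>"
    and es: "\<forall>j\<in>participants Bs \<alpha>. es j \<in> edges (Bs ! j) \<and> lab (es j) \<in> \<alpha>"
    and "i < length Bs" and "b \<in> acts (Bs ! i)"
  shows "b \<in> \<alpha> \<longleftrightarrow> i \<in> participants Bs \<alpha> \<and> b = lab (es i)"
proof (cases "i \<in> participants Bs \<alpha>")
  case True
  then have "lab (es i) \<in> \<alpha> \<inter> acts (Bs ! i)"
    using es wf assms(4) wf_ta_edge(1)[of "Bs ! i" "es i"] by auto
  then show ?thesis
    using True assms(2,4,5) unfolding is_interaction_def by blast
next
  case False
  then show ?thesis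
    using assms(4,5) unfolding participants_iff by blast
qed

lemma sys_edge_hist_resets_local:
  assumes wf: "\<forall>i<length Bs. wf_ta (Bs ! i)"
    and disj: "\<forall>i<length Bs. \<forall>j<length Bs. i \<noteq> j \<longrightarrow> clks (Bs ! i) \<inter> clks (Bs ! j) = {}"
    and "is_interaction Bs \<alpha>"
    and es: "\<forall>j\<in>participants Bs \<alpha>. es j \<in> edges (Bs ! j) \<and> lab (es j) \<in> \<alpha>"
    and i: "i < length Bs"
  shows "(Cl ` (\<Union>j\<in>participants Bs \<alpha>. rst (es j)) \<union> Hact ` \<alpha>) \<inter> clks (hist (Bs ! i))
    = (if i \<in> participants Bs \<alpha> then Cl ` rst (es i) \<union> {Hact (lab (es i))} else {}) \<inter> clks (hist (Bs ! i))"
proof -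
  have clk: "x \<in> (\<Union>j\<in>participants Bs \<alpha>. rst (es j)) \<longleftrightarrow> i \<in> participants Bs \<alpha> \<and> x \<in> rst (es i)"
    if "x \<in> clks (Bs ! i)" for x
    using sys_edge_clock_reset_local[OF wf disj _ i that] es by blast
  have act: "b \<in> \<alpha> \<longleftrightarrow> i \<in> participants Bs \<alpha> \<and> b = lab (es i)" if "b \<in> acts (Bs ! i)" for b
    using interaction_action_local[OF wf assms(3) es i that] .
  have "rst (es i) \<subseteq> clks (Bs ! i)" and "lab (es i) \<in> acts (Bs ! i)" if "i \<in> participants Bs \<alpha>"
    using wf_ta_edge[of "Bs ! i" "es i"] wf es i that by auto
  then show ?thesis
    using clk act by auto
qed

lemma comps_reachable_fire:
  assumes wf: "\<forall>i<length Bs. wf_ta (Bs ! i)"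
    and disj: "\<forall>i<length Bs. \<forall>j<length Bs. i \<noteq> j \<longrightarrow> clks (Bs ! i) \<inter> clks (Bs ! j) = {}"
    and "is_interaction Bs \<alpha>" and comps: "comps_reachable Bs l w"
    and edge: "(l, \<alpha>, g, r, l') \<in> edges (sys Bs \<gamma>)"
    and sat_g: "sat (\<lambda>x. w (Cl x)) g" and sat_tpc_l': "sat_tpc (sys Bs \<gamma>) l' (reset r (\<lambda>x. w (Cl x)))"
  shows "comps_reachable Bs l' (reset (Cl ` r \<union> Hact ` \<alpha>) w)"
  unfolding comps_reachable_def
proof (intro allI impI)
  fix i assume i: "i < length Bs"
  define P where "P = participants Bs \<alpha>"
  define v where "v = (\<lambda>x. w (Cl x))"
  obtain es where es: "\<forall>j\<in>P. es j \<in> edges (Bs ! j) \<and> src (es j) = l ! j \<and> lab (es j) \<in> \<alpha>"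
    and g: "g = (\<Union>j\<in>P. grd (es j))" and r: "r = (\<Union>j\<in>P. rst (es j))"
    and l': "l' ! i = (if i \<in> P then tgt (es i) else l ! i)"
    using edge i unfolding P_def by (elim sys_edgeE) blast
  have r_local: "x \<in> r \<longleftrightarrow> i \<in> P \<and> x \<in> rst (es i)" if "x \<in> clks (Bs ! i)" for x
    unfolding r P_def using sys_edge_clock_reset_local[OF wf disj _ i that] es P_def by blast
  have resets_local: "(Cl ` r \<union> Hact ` \<alpha>) \<inter> clks (hist (Bs ! i))
      = (if i \<in> P then Cl ` rst (es i) \<union> {Hact (lab (es i))} else {}) \<inter> clks (hist (Bs ! i))"
    unfolding r P_def using sys_edge_hist_resets_local[OF wf disj assms(3) _ i] es P_def by blast
  obtain u where u: "reach (hist (Bs ! i)) (l ! i) u" and agree: "\<forall>c\<in>clks (hist (Bs ! i)). u c = w c"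
    using comps i unfolding comps_reachable_def by blast
  show "\<exists>u. reach (hist (Bs ! i)) (l' ! i) u \<and>
      (\<forall>c\<in>clks (hist (Bs ! i)). u c = reset (Cl ` r \<union> Hact ` \<alpha>) w c)"
  proof (cases "i \<in> P")
    case True
    have "sat v (grd (es i))"
      using sat_g True unfolding g v_def sat_def by blast
    moreover have "sat_tpc (Bs ! i) (tgt (es i)) (reset r v)"
      using sat_tpc_l' i l' True unfolding v_def sat_tpc_sys by (metis (full_types))
    moreover have "\<forall>x\<in>clks (Bs ! i). reset r v x = reset (rst (es i)) v x"
      using r_local True unfolding reset_def by auto
    moreover have "\<forall>x\<in>clks (Bs ! i). u (Cl x) = v x"
      using agree unfolding v_def by simp
    ultimately have "reach (hist (Bs ! i)) (tgt (es i)) (reset (Cl ` rst (es i) \<union> {Hact (lab (es i))}) u)"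
      using wf i es True u by (intro reach_hist_edge[where v'="reset r v"]) auto
    then show ?thesis
      using reset_agree[OF agree resets_local[symmetric]] True l' by auto
  next
    case False
    have "reset {} u = u"
      by (simp add: reset_def)
    then show ?thesis
      using reset_agree[OF agree resets_local[symmetric]] u False l' by auto
  qed
qed

lemma reach_sys_hist_lift:
  fixes Bs :: "('l, 'a, 'x) ta list"
  assumes wf: "\<forall>i<length Bs. wf_ta (Bs ! i)"
    and disj: "\<forall>i<length Bs. \<forall>j<length Bs. i \<noteq> j \<longrightarrow> clks (Bs ! i) \<inter> clks (Bs ! j) = {}"
    and interactions: "\<forall>\<alpha>\<in>\<gamma>. is_interaction Bs \<alpha>"
    and "reach (sys Bs \<gamma>) ls v"
  shows "\<exists>w. (\<forall>x. w (Cl x) = v x) \<and> 0 \<le> w H0 \<and> hist_ordered \<gamma> (\<lambda>a. w (Hact a))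
           \<and> comps_reachable Bs ls w"
  using assms(4)
proof induction
  case (init v)
  define w :: "('x, 'a) hclk val" where "w = case_hclk v 0 (\<lambda>_. 1)"
  have "comps_reachable Bs (map init_loc Bs) w"
    using init by (intro comps_reachable_init) (auto simp: w_def split: hclk.split)
  then show ?case
    using hist_ordered_const[of 1] by (intro exI[of _ w]) (simp add: w_def)
next
  case (time ls v d)
  then obtain w where "\<forall>x. w (Cl x) = v x" "0 \<le> w H0" "hist_ordered \<gamma> (\<lambda>a. w (Hact a))"
    "comps_reachable Bs ls w"
    by blast
  moreover from this have "v = (\<lambda>x. w (Cl x))"
    by auto
  ultimately show ?case
    using time.hyps(2,3) comps_reachable_delay[OF wf] hist_ordered_delay
    by (intro exI[of _ "delay w d"]) (auto simp: delay_def)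
next
  case (disc ls v \<alpha> g r ls')
  then obtain w where "\<forall>x. w (Cl x) = v x" "0 \<le> w H0" "hist_ordered \<gamma> (\<lambda>a. w (Hact a))"
    "comps_reachable Bs ls w"
    by blast
  moreover from this have "v = (\<lambda>x. w (Cl x))"
    by auto
  moreover have "\<alpha> \<in> \<gamma>"
    using disc.hyps(2) by (rule sys_edgeE)
  ultimately show ?case
    using disc.hyps(2-4) interactions comps_reachable_fire[OF wf disj]
      hist_ordered_fire[of \<gamma> "\<lambda>a. w (Hact a)" \<alpha>]
    by (intro exI[of _ "reset (Cl ` r \<union> Hact ` \<alpha>) w"]) (auto simp: reset_def image_iff)
qed

theorem corollary1:
  fixes Bs :: "('l, 'a, 'x) ta list"
    and \<gamma> :: "'a set set"
    and nrm :: "nat \<Rightarrow> ('x, 'a) hclk zone \<Rightarrow> ('x, 'a) hclk zone"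
  assumes "\<forall>i<length Bs. wf_ta (Bs ! i)"
    and "\<forall>i<length Bs. \<forall>j<length Bs. i \<noteq> j \<longrightarrow> acts (Bs ! i) \<inter> acts (Bs ! j) = {}"
    and "\<forall>i<length Bs. \<forall>j<length Bs. i \<noteq> j \<longrightarrow> clks (Bs ! i) \<inter> clks (Bs ! j) = {}"
    and "\<forall>\<alpha>\<in>\<gamma>. is_interaction Bs \<alpha>"
    and "\<forall>i Z. Z \<subseteq> nrm i Z"
  shows "invariant (sys Bs \<gamma>) (Phi Bs \<gamma> nrm)"
  unfolding invariant_def
proof (intro allI impI)
  fix ls v assume reach: "reach (sys Bs \<gamma>) ls v"
  then obtain w where w: "\<forall>x. w (Cl x) = v x" "0 \<le> w H0" and hist: "hist_ordered \<gamma> (\<lambda>a. w (Hact a))"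
    and comps: "comps_reachable Bs ls w"
    using reach_sys_hist_lift[OF assms(1,3,4)] by blast
  have "\<forall>i<length Bs. CI (hist (Bs ! i)) (nrm i) (ls ! i) w"
    using comps assms(5) CI_if_reach unfolding comps_reachable_def by metis
  moreover have "EE \<gamma> (\<lambda>a. w (Hact a))"
  proof (rule EE_if_hist_ordered[OF hist])
    have "Act \<gamma> \<subseteq> (\<Union>i<length Bs. acts (Bs ! i))"
      using assms(4) unfolding Act_def is_interaction_def by blast
    then show "finite (Act \<gamma>)"
      using assms(1) unfolding wf_ta_def by (auto intro: finite_subset)
    show "\<forall>\<alpha>\<in>\<gamma>. \<alpha> \<noteq> {}"
      using assms(4) unfolding is_interaction_def by blast
  qed
  ultimately show "Phi Bs \<gamma> nrm ls v"
    unfolding Phi_def using w hist_ordered_nonneg[OF hist] II_invariant[OF reach] by blast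
qed

end
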